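(* Let $\lambda>0$, $\gamma>0$, $\beta\ge 0$. Let $X$ be the Banach space of bounded analytic functions $h:[0,\lambda]\to\mathbb{R}$ with the supremum norm $\|h\|_\infty=\sup\{|h(x)|:0\le x\le\lambda\}$, and $K=\{h\in X: h\ge 0,\ \|h\|_\infty\le 1\}$. For $h\in K$ let $\Psi_h=1+\beta h$. Then for $h\in K$ the only solution $y$ of the linear problem \begin{align*} &[\Psi_h(\eta)y'(\eta)]'+2\eta y'(\eta)=0,\quad 0<\eta<\lambda,\\ &\Psi_h(0)y'(0)-\gamma y(0)=0,\\ &y(\lambda)=1, \end{align*} is given by $$y(\eta)=D_h\left(\frac1\gamma+\int_0^\eta\frac{\exp\left(-2\int_0^x\frac{\xi}{\Psi_h(\xi)}d\xi\right)}{\Psi_h(x)}\,dx\right),\quad 0<\eta<\lambda,$$ where $$D_h=\gamma\left(1+\gamma\int_0^\lambda\frac{\exp\left(-2\int_0^x\frac{\xi}{\Psi_h(\xi)}d\xi\right)}{\Psi_h(x)}\,dx\right)^{-1}.$$ Moreover, $y\in K$. *)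

theory Defs
  imports "HOL-Analysis.Analysis"
begin

definition real_analytic_on :: "(real \<Rightarrow> real) \<Rightarrow> real set \<Rightarrow> bool" where
  "real_analytic_on h S \<longleftrightarrow>
     (\<forall>x\<in>S. \<exists>r>0. \<exists>a::nat \<Rightarrow> real.
        \<forall>y\<in>S. \<bar>y - x\<bar> < r \<longrightarrow> (\<lambda>n. a n * (y - x) ^ n) sums h y)"

text \<open>The space X: bounded analytic functions on [0,lam] (only values on [0,lam] matter).\<close>
definition Xspace :: "real \<Rightarrow> (real \<Rightarrow> real) set" where
  "Xspace lam = {h. real_analytic_on h {0..lam} \<and> bounded (h ` {0..lam})}"

definition supnorm :: "real \<Rightarrow> (real \<Rightarrow> real) \<Rightarrow> real" where
  "supnorm lam h = (SUP x\<in>{0..lam}. \<bar>h x\<bar>)"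

definition Kset :: "real \<Rightarrow> (real \<Rightarrow> real) set" where
  "Kset lam = {h \<in> Xspace lam. (\<forall>x\<in>{0..lam}. h x \<ge> 0) \<and> supnorm lam h \<le> 1}"

definition Psi :: "real \<Rightarrow> (real \<Rightarrow> real) \<Rightarrow> real \<Rightarrow> real" where
  "Psi \<beta> h \<eta> = 1 + \<beta> * h \<eta>"

definition solves_bvp :: "real \<Rightarrow> real \<Rightarrow> real \<Rightarrow> (real \<Rightarrow> real) \<Rightarrow> (real \<Rightarrow> real) \<Rightarrow> bool" where
  "solves_bvp lam \<beta> \<gamma> h y \<longleftrightarrow>
     continuous_on {0..lam} y \<and>
     (\<exists>y' w. (\<forall>x\<in>{0..<lam}. (y has_real_derivative y' x) (at x within {0..lam})) \<and>
            (\<forall>x\<in>{0<..<lam}. ((\<lambda>t. Psi \<beta> h t * y' t) has_real_derivative w x) (at x)) \<and>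
            (\<forall>x\<in>{0<..<lam}. w x + 2 * x * y' x = 0) \<and>
            Psi \<beta> h 0 * y' 0 - \<gamma> * y 0 = 0) \<and>
     y lam = 1"

definition Ifun :: "real \<Rightarrow> (real \<Rightarrow> real) \<Rightarrow> real \<Rightarrow> real" where
  "Ifun \<beta> h x = exp (- 2 * integral {0..x} (\<lambda>\<xi>. \<xi> / Psi \<beta> h \<xi>)) / Psi \<beta> h x"

definition Dconst :: "real \<Rightarrow> real \<Rightarrow> real \<Rightarrow> (real \<Rightarrow> real) \<Rightarrow> real" where
  "Dconst lam \<beta> \<gamma> h = \<gamma> * inverse (1 + \<gamma> * integral {0..lam} (Ifun \<beta> h))"

definition yformula :: "real \<Rightarrow> real \<Rightarrow> real \<Rightarrow> (real \<Rightarrow> real) \<Rightarrow> real \<Rightarrow> real" where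
  "yformula lam \<beta> \<gamma> h \<eta> = Dconst lam \<beta> \<gamma> h * (1 / \<gamma> + integral {0..\<eta>} (Ifun \<beta> h))"

end

theory Submission
  imports Defs "HOL-Complex_Analysis.Cauchy_Integral_Formula"
begin

text \<open>
  Write F(x) for the integral of xi/Psi(xi) over [0,x] and I = exp(-2F)/Psi for the integrand
  of the solution formula. The factor exp(2F) integrates the equation:
  (Psi y' exp(2F))' = exp(2F) ((Psi y')' + 2 eta y') = 0, so y' = C I for a constant C.
  Integrating, the Robin condition at 0 gives y(0) = C/gamma, and y(lam) = 1 forces C = D_h;
  conversely this function solves the problem. As I > 0, the solution increases from
  D_h/gamma > 0 to 1, so it takes values in [0,1].

  For analyticity we use that a function on an interval is real analytic exactly when it
  extends holomorphically near every point. Such functions are closed under sums, products,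
  exp, reciprocals of nonvanishing functions and indefinite integrals, and the solution
  formula is built from h by these operations.
\<close>

section \<open>Real analyticity through local holomorphic extensions\<close>

definition holomorphic_extension_at :: "real set \<Rightarrow> (real \<Rightarrow> real) \<Rightarrow> real \<Rightarrow> bool" where
  "holomorphic_extension_at S f x \<longleftrightarrow>
     (\<exists>U g. open U \<and> complex_of_real x \<in> U \<and> g holomorphic_on U \<and>
        (\<forall>y\<in>S. complex_of_real y \<in> U \<longrightarrow> g (complex_of_real y) = complex_of_real (f y)))"

lemma holomorphic_extension_atE:
  assumes "holomorphic_extension_at S f x"
  obtains U g where "open U" "complex_of_real x \<in> U" "g holomorphic_on U"
    "\<And>y. y \<in> S \<Longrightarrow> complex_of_real y \<in> U \<Longrightarrow> g (complex_of_real y) = complex_of_real (f y)"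
  using assms unfolding holomorphic_extension_at_def by blast

lemma holomorphic_extension_atI:
  assumes "open U" "complex_of_real x \<in> U" "g holomorphic_on U"
    "\<And>y. y \<in> S \<Longrightarrow> complex_of_real y \<in> U \<Longrightarrow> g (complex_of_real y) = complex_of_real (f y)"
  shows "holomorphic_extension_at S f x"
  using assms unfolding holomorphic_extension_at_def by blast

lemma holomorphic_extension_at_cong:
  "holomorphic_extension_at S f x \<Longrightarrow> (\<And>t. t \<in> S \<Longrightarrow> f t = f' t) \<Longrightarrow> holomorphic_extension_at S f' x"
  unfolding holomorphic_extension_at_def by metis

lemma holomorphic_extension_at_const: "holomorphic_extension_at S (\<lambda>_. c) x"
  by (rule holomorphic_extension_atI[of UNIV _ "\<lambda>_. complex_of_real c"]) auto

lemma holomorphic_extension_at_ident: "holomorphic_extension_at S (\<lambda>t. t) x"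
  by (rule holomorphic_extension_atI[of UNIV _ "\<lambda>z. z"]) auto

lemma holomorphic_extension_at_add:
  assumes "holomorphic_extension_at S f x" "holomorphic_extension_at S g x"
  shows "holomorphic_extension_at S (\<lambda>t. f t + g t) x"
proof -
  obtain U1 g1 where 1: "open U1" "complex_of_real x \<in> U1" "g1 holomorphic_on U1"
    "\<And>y. y \<in> S \<Longrightarrow> complex_of_real y \<in> U1 \<Longrightarrow> g1 (complex_of_real y) = complex_of_real (f y)"
    using assms(1) by (rule holomorphic_extension_atE) (rule that)
  obtain U2 g2 where 2: "open U2" "complex_of_real x \<in> U2" "g2 holomorphic_on U2"
    "\<And>y. y \<in> S \<Longrightarrow> complex_of_real y \<in> U2 \<Longrightarrow> g2 (complex_of_real y) = complex_of_real (g y)"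
    using assms(2) by (rule holomorphic_extension_atE) (rule that)
  show ?thesis
    by (rule holomorphic_extension_atI[of "U1 \<inter> U2" _ "\<lambda>z. g1 z + g2 z"])
       (use 1 2 in \<open>auto intro!: holomorphic_intros intro: holomorphic_on_subset\<close>)
qed

lemma holomorphic_extension_at_mult:
  assumes "holomorphic_extension_at S f x" "holomorphic_extension_at S g x"
  shows "holomorphic_extension_at S (\<lambda>t. f t * g t) x"
proof -
  obtain U1 g1 where 1: "open U1" "complex_of_real x \<in> U1" "g1 holomorphic_on U1"
    "\<And>y. y \<in> S \<Longrightarrow> complex_of_real y \<in> U1 \<Longrightarrow> g1 (complex_of_real y) = complex_of_real (f y)"
    using assms(1) by (rule holomorphic_extension_atE) (rule that)
  obtain U2 g2 where 2: "open U2" "complex_of_real x \<in> U2" "g2 holomorphic_on U2"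
    "\<And>y. y \<in> S \<Longrightarrow> complex_of_real y \<in> U2 \<Longrightarrow> g2 (complex_of_real y) = complex_of_real (g y)"
    using assms(2) by (rule holomorphic_extension_atE) (rule that)
  show ?thesis
    by (rule holomorphic_extension_atI[of "U1 \<inter> U2" _ "\<lambda>z. g1 z * g2 z"])
       (use 1 2 in \<open>auto intro!: holomorphic_intros intro: holomorphic_on_subset\<close>)
qed

lemma holomorphic_extension_at_exp:
  assumes "holomorphic_extension_at S f x"
  shows "holomorphic_extension_at S (\<lambda>t. exp (f t)) x"
proof -
  obtain U g where "open U" "complex_of_real x \<in> U" "g holomorphic_on U"
    "\<And>y. y \<in> S \<Longrightarrow> complex_of_real y \<in> U \<Longrightarrow> g (complex_of_real y) = complex_of_real (f y)"
    using assms by (rule holomorphic_extension_atE) (rule that)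
  then show ?thesis
    by (intro holomorphic_extension_atI[of U _ "\<lambda>z. exp (g z)"])
       (auto intro!: holomorphic_intros simp: exp_of_real)
qed

lemma holomorphic_extension_at_inverse:
  assumes "holomorphic_extension_at S f x" "x \<in> S" "f x \<noteq> 0"
  shows "holomorphic_extension_at S (\<lambda>t. inverse (f t)) x"
proof -
  obtain U g where U: "open U" "complex_of_real x \<in> U" "g holomorphic_on U"
    "\<And>y. y \<in> S \<Longrightarrow> complex_of_real y \<in> U \<Longrightarrow> g (complex_of_real y) = complex_of_real (f y)"
    using assms(1) by (rule holomorphic_extension_atE) (rule that)
  define V where "V = U \<inter> g -` (- {0})"
  have "open V"
    unfolding V_def
    using continuous_open_preimage[OF holomorphic_on_imp_continuous_on[OF U(3)] U(1)] by blast
  moreover have "complex_of_real x \<in> V" using U(2,4) assms(2,3) by (simp add: V_def)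
  moreover have "(\<lambda>z. inverse (g z)) holomorphic_on V"
    by (intro holomorphic_intros holomorphic_on_subset[OF U(3)]) (auto simp: V_def)
  ultimately show ?thesis
    by (rule holomorphic_extension_atI) (simp add: U(4) V_def)
qed

lemma holomorphic_extension_imp_continuous_on:
  assumes "\<And>x. x \<in> S \<Longrightarrow> holomorphic_extension_at S f x"
  shows "continuous_on S f"
  unfolding continuous_on_eq_continuous_within
proof
  fix x assume x: "x \<in> S"
  obtain U g where U: "open U" "complex_of_real x \<in> U" "g holomorphic_on U"
    "\<And>y. y \<in> S \<Longrightarrow> complex_of_real y \<in> U \<Longrightarrow> g (complex_of_real y) = complex_of_real (f y)"
    using assms[OF x] by (rule holomorphic_extension_atE) (rule that)
  have gx: "isCont g (complex_of_real x)"
    using U(1-3) holomorphic_on_imp_continuous_on continuous_on_eq_continuous_at by blast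
  have "isCont (\<lambda>t. g (complex_of_real t)) x"
    by (rule isCont_o2[where f=complex_of_real and a=x, OF _ gx]) (intro continuous_intros)
  then have "isCont (\<lambda>t. Re (g (complex_of_real t))) x"
    by (rule isCont_Re)
  moreover obtain e where e: "e > 0" "ball (complex_of_real x) e \<subseteq> U"
    using U(1,2) openE by blast
  moreover have "Re (g (complex_of_real y)) = f y" if "y \<in> S" "dist y x < e" for y
  proof -
    have "complex_of_real y \<in> U"
      using that(2) e by (auto simp: dist_norm norm_of_real simp flip: of_real_diff)
    then show ?thesis using U(4)[OF that(1)] by simp
  qed
  ultimately show "continuous (at x within S) f"
    using continuous_transform_within[OF continuous_at_imp_continuous_at_within _ x] by blast
qed

lemma real_analytic_on_imp_holomorphic_extension_at:
  assumes "real_analytic_on f {a..b}" "a < b" "x \<in> {a..b}"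
  shows "holomorphic_extension_at {a..b} f x"
proof -
  obtain r c where r: "r > 0"
    "\<And>y. y \<in> {a..b} \<Longrightarrow> \<bar>y - x\<bar> < r \<Longrightarrow> (\<lambda>n. c n * (y - x) ^ n) sums f y"
    using assms(1,3) unfolding real_analytic_on_def by blast
  \<comment> \<open>A second point y0 of the interval inside the radius makes the series converge on the
    complex disc of radius |y0 - x|; this is where a < b is needed.\<close>
  define \<delta> where "\<delta> = min r (b - a) / 2"
  have \<delta>: "0 < \<delta>" "\<delta> < r" "2 * \<delta> \<le> b - a"
    using r(1) assms(2) by (auto simp: \<delta>_def min_def)
  obtain y0 where y0: "y0 \<in> {a..b}" "y0 \<noteq> x" "\<bar>y0 - x\<bar> < r"
  proof (cases "x + \<delta> \<le> b")
    case True
    then show ?thesis using that[of "x + \<delta>"] \<delta> assms(3) by auto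
  next
    case False
    then show ?thesis using that[of "x - \<delta>"] \<delta> assms(3) by auto
  qed
  define d where "d = \<bar>y0 - x\<bar>"
  define g where "g = (\<lambda>z. \<Sum>n. complex_of_real (c n) * (z - complex_of_real x) ^ n)"
  have "summable (\<lambda>n. complex_of_real (c n * (y0 - x) ^ n))"
    using sums_summable[OF r(2)[OF y0(1,3)]] by (simp only: summable_of_real_iff)
  then have summable_y0: "summable (\<lambda>n. complex_of_real (c n) * complex_of_real (y0 - x) ^ n)"
    by simp
  have "g holomorphic_on ball (complex_of_real x) d"
  proof (rule power_series_holomorphic)
    fix w assume "w \<in> ball (complex_of_real x) d"
    then have "norm (w - complex_of_real x) < norm (complex_of_real (y0 - x))"
      unfolding norm_of_real by (simp add: d_def dist_norm norm_minus_commute)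
    then show "(\<lambda>n. complex_of_real (c n) * (w - complex_of_real x) ^ n) sums g w"
      unfolding g_def by (intro summable_sums powser_inside[OF summable_y0])
  qed
  moreover have "g (complex_of_real y) = complex_of_real (f y)"
    if "y \<in> {a..b}" "complex_of_real y \<in> ball (complex_of_real x) d" for y
  proof -
    have "\<bar>y - x\<bar> < r"
      using that(2) y0(3) by (simp add: d_def dist_norm norm_minus_commute flip: of_real_diff)
    then have "(\<lambda>n. complex_of_real (c n * (y - x) ^ n)) sums complex_of_real (f y)"
      using r(2)[OF that(1)] by (simp only: sums_of_real_iff)
    then show ?thesis unfolding g_def by (simp add: sums_iff)
  qed
  ultimately show ?thesis
    by (intro holomorphic_extension_atI[of "ball (complex_of_real x) d"]) (use y0(2) in \<open>auto simp: d_def\<close>)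
qed

lemma holomorphic_extension_imp_real_analytic_on:
  assumes "\<And>x. x \<in> S \<Longrightarrow> holomorphic_extension_at S f x"
  shows "real_analytic_on f S"
  unfolding real_analytic_on_def
proof
  fix x assume x: "x \<in> S"
  obtain U g where U: "open U" "complex_of_real x \<in> U" "g holomorphic_on U"
    "\<And>y. y \<in> S \<Longrightarrow> complex_of_real y \<in> U \<Longrightarrow> g (complex_of_real y) = complex_of_real (f y)"
    using assms[OF x] by (rule holomorphic_extension_atE) (rule that)
  obtain r where r: "r > 0" "ball (complex_of_real x) r \<subseteq> U"
    using U(1,2) openE by blast
  define c where "c = (\<lambda>n. (deriv ^^ n) g (complex_of_real x) / fact n)"
  have "(\<lambda>n. Re (c n) * (y - x) ^ n) sums f y" if "y \<in> S" "\<bar>y - x\<bar> < r" for y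
  proof -
    have y: "complex_of_real y \<in> ball (complex_of_real x) r"
      using that(2) by (simp add: dist_norm abs_minus_commute flip: of_real_diff)
    have "g (complex_of_real y) = complex_of_real (f y)"
      using U(4)[OF that(1)] r(2) y by blast
    then have "(\<lambda>n. c n * complex_of_real ((y - x) ^ n)) sums complex_of_real (f y)"
      using holomorphic_power_series[OF holomorphic_on_subset[OF U(3) r(2)] y]
      by (simp add: c_def)
    from sums_Re[OF this] have "(\<lambda>n. Re (c n * complex_of_real ((y - x) ^ n))) sums f y"
      by (simp only: Re_complex_of_real)
    moreover have "Re (c n * complex_of_real t) = Re (c n) * t" for n t
      by simp
    ultimately show ?thesis
      by (simp only:)
  qed
  with r(1) show "\<exists>r>0. \<exists>a. \<forall>y\<in>S. \<bar>y - x\<bar> < r \<longrightarrow> (\<lambda>n. a n * (y - x) ^ n) sums f y"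
    by (intro exI[of _ r] conjI exI[of _ "\<lambda>n. Re (c n)"]) auto
qed

lemma holomorphic_extension_at_integral:
  assumes "continuous_on {a..b} f" "holomorphic_extension_at {a..b} f x" "x \<in> {a..b}"
  shows "holomorphic_extension_at {a..b} (\<lambda>t. integral {a..t} f) x"
proof -
  obtain U g where U: "open U" "complex_of_real x \<in> U" "g holomorphic_on U"
    "\<And>y. y \<in> {a..b} \<Longrightarrow> complex_of_real y \<in> U \<Longrightarrow> g (complex_of_real y) = complex_of_real (f y)"
    using assms(2) by (rule holomorphic_extension_atE) (rule that)
  obtain r where r: "r > 0" "ball (complex_of_real x) r \<subseteq> U"
    using U(1,2) openE by blast
  define B where "B = ball (complex_of_real x) r"
  define F where "F = (\<lambda>t. integral {a..t} f)"
  have "convex B" "open B" "g holomorphic_on B"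
    using holomorphic_on_subset[OF U(3) r(2)] by (simp_all add: B_def)
  then obtain G where "\<And>z. z \<in> B \<Longrightarrow> (G has_field_derivative g z) (at z within B)"
    by (rule holomorphic_convex_primitive') iprover
  then have G: "(G has_field_derivative g z) (at z)" if "z \<in> B" for z
    using that at_within_open[OF that \<open>open B\<close>] by metis
  define H where "H = (\<lambda>z. G z - G (complex_of_real x) + complex_of_real (F x))"
  have H: "(H has_field_derivative g z) (at z)" if "z \<in> B" for z
    unfolding H_def using G[OF that] by (auto intro!: derivative_eq_intros)
  define T where "T = {a..b} \<inter> {x - r<..<x + r}"
  have T_B: "complex_of_real t \<in> B" if "t \<in> T" for t
    using that by (auto simp: T_def B_def dist_norm abs_less_iff simp flip: of_real_diff)
  \<comment> \<open>The complex primitive H of g restricts to a real primitive of f, so H - F is constant on T.\<close>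
  have "((\<lambda>t. H (complex_of_real t) - complex_of_real (F t)) has_vector_derivative 0) (at t within T)"
    if t: "t \<in> T" for t
  proof -
    have "(F has_real_derivative f t) (at t within {a..b})"
      unfolding F_def has_real_derivative_iff_has_vector_derivative
      by (rule integral_has_vector_derivative[OF assms(1)]) (use t T_def in auto)
    then have "((\<lambda>t. complex_of_real (F t)) has_vector_derivative complex_of_real (f t)) (at t within T)"
      by (intro has_vector_derivative_of_real) (rule DERIV_subset, auto simp: T_def)
    then have "((\<lambda>t. H (complex_of_real t) - complex_of_real (F t)) has_vector_derivative
        g (complex_of_real t) - complex_of_real (f t)) (at t within T)"
      by (rule has_vector_derivative_diff[OF has_vector_derivative_real_field[OF H[OF T_B[OF t]]]])
    moreover have "g (complex_of_real t) = complex_of_real (f t)"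
      using U(4)[of t] r(2) T_B[OF t] t unfolding B_def T_def by blast
    ultimately show ?thesis
      by simp
  qed
  moreover have "convex T"
    unfolding T_def by (intro convex_Int convex_real_interval)
  ultimately obtain k where k: "\<And>t. t \<in> T \<Longrightarrow> H (complex_of_real t) - complex_of_real (F t) = k"
    using has_vector_derivative_zero_constant by blast
  have "x \<in> T" using assms(3) r(1) by (auto simp: T_def)
  then have "k = 0" using k by (force simp: H_def)
  have "(\<lambda>z. H z) holomorphic_on B"
    using H \<open>open B\<close> by (auto simp: holomorphic_on_open)
  moreover have "H (complex_of_real y) = complex_of_real (F y)"
    if "y \<in> {a..b}" "complex_of_real y \<in> B" for y
  proof -
    have "y \<in> T"
      using that by (auto simp: T_def B_def dist_norm abs_less_iff simp flip: of_real_diff)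
    then show ?thesis using k \<open>k = 0\<close> by force
  qed
  ultimately show ?thesis
    unfolding F_def by (intro holomorphic_extension_atI[of B]) (use r(1) in \<open>auto simp: B_def\<close>)
qed

lemma real_analytic_on_imp_continuous_on:
  "real_analytic_on f {a..b} \<Longrightarrow> a < b \<Longrightarrow> continuous_on {a..b} f"
  by (intro holomorphic_extension_imp_continuous_on real_analytic_on_imp_holomorphic_extension_at)

section \<open>The linear boundary value problem\<close>

lemma solves_bvpI:
  assumes "continuous_on {0..lam} y"
    and "\<And>x. x \<in> {0..<lam} \<Longrightarrow> (y has_real_derivative y' x) (at x within {0..lam})"
    and "\<And>x. x \<in> {0<..<lam} \<Longrightarrow> ((\<lambda>t. Psi \<beta> h t * y' t) has_real_derivative w x) (at x)"
    and "\<And>x. x \<in> {0<..<lam} \<Longrightarrow> w x + 2 * x * y' x = 0"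
    and "Psi \<beta> h 0 * y' 0 - \<gamma> * y 0 = 0" and "y lam = 1"
  shows "solves_bvp lam \<beta> \<gamma> h y"
  unfolding solves_bvp_def using assms by blast

lemma solves_bvpE:
  assumes "solves_bvp lam \<beta> \<gamma> h y"
  obtains y' w where "continuous_on {0..lam} y"
    and "\<And>x. x \<in> {0..<lam} \<Longrightarrow> (y has_real_derivative y' x) (at x within {0..lam})"
    and "\<And>x. x \<in> {0<..<lam} \<Longrightarrow> ((\<lambda>t. Psi \<beta> h t * y' t) has_real_derivative w x) (at x)"
    and "\<And>x. x \<in> {0<..<lam} \<Longrightarrow> w x + 2 * x * y' x = 0"
    and "Psi \<beta> h 0 * y' 0 - \<gamma> * y 0 = 0" and "y lam = 1"
  using assms unfolding solves_bvp_def by (elim conjE exE) (rule that[rotated -1], auto)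

lemma solves_bvp_cong:
  assumes "solves_bvp lam \<beta> \<gamma> h y" "lam > 0" "\<And>\<eta>. \<eta> \<in> {0..lam} \<Longrightarrow> y \<eta> = z \<eta>"
  shows "solves_bvp lam \<beta> \<gamma> h z"
proof -
  obtain y' w where y_cont: "continuous_on {0..lam} y"
    and y': "\<And>x. x \<in> {0..<lam} \<Longrightarrow> (y has_real_derivative y' x) (at x within {0..lam})"
    and "\<And>x. x \<in> {0<..<lam} \<Longrightarrow> ((\<lambda>t. Psi \<beta> h t * y' t) has_real_derivative w x) (at x)"
    and "\<And>x. x \<in> {0<..<lam} \<Longrightarrow> w x + 2 * x * y' x = 0"
    and "Psi \<beta> h 0 * y' 0 - \<gamma> * y 0 = 0" and "y lam = 1"
    using assms(1) by (rule solves_bvpE) (rule that)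
  moreover have "y 0 = z 0" "y lam = z lam"
    using assms(2,3) by auto
  moreover have "continuous_on {0..lam} z"
    using continuous_on_eq[OF y_cont assms(3)] .
  moreover have "(z has_real_derivative y' x) (at x within {0..lam})" if "x \<in> {0..<lam}" for x
    by (rule has_field_derivative_transform_within[OF y'[OF that] zero_less_one])
      (use that in \<open>auto simp: assms(3)\<close>)
  ultimately show ?thesis
    by (intro solves_bvpI[of _ z y' _ _ w]) auto
qed

lemma supnorm_le:
  assumes "lam \<ge> 0" "\<And>x. x \<in> {0..lam} \<Longrightarrow> \<bar>f x\<bar> \<le> c"
  shows "supnorm lam f \<le> c"
  unfolding supnorm_def using assms by (intro cSUP_least) auto

locale linear_bvp =
  fixes lam \<beta> \<gamma> :: real and h :: "real \<Rightarrow> real"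
  assumes lam_pos: "lam > 0" and gamma_pos: "\<gamma> > 0"
    and continuous_Psi: "continuous_on {0..lam} (Psi \<beta> h)"
    and Psi_pos: "\<And>x. x \<in> {0..lam} \<Longrightarrow> Psi \<beta> h x > 0"
begin

abbreviation F :: "real \<Rightarrow> real" where
  "F x \<equiv> integral {0..x} (\<lambda>\<xi>. \<xi> / Psi \<beta> h \<xi>)"

abbreviation J :: "real \<Rightarrow> real" where
  "J x \<equiv> integral {0..x} (Ifun \<beta> h)"

lemma Psi_nonzero: "x \<in> {0..lam} \<Longrightarrow> Psi \<beta> h x \<noteq> 0"
  using Psi_pos by force

lemma continuous_on_drift: "continuous_on {0..lam} (\<lambda>\<xi>. \<xi> / Psi \<beta> h \<xi>)"
  by (intro continuous_intros continuous_Psi ballI Psi_nonzero)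

lemma F_has_derivative:
  "x \<in> {0..lam} \<Longrightarrow> (F has_real_derivative x / Psi \<beta> h x) (at x within {0..lam})"
  using integral_has_vector_derivative[OF continuous_on_drift]
  by (simp add: has_real_derivative_iff_has_vector_derivative)

lemma F_has_derivative_at:
  "x \<in> {0<..<lam} \<Longrightarrow> (F has_real_derivative x / Psi \<beta> h x) (at x)"
  using F_has_derivative[of x] by (simp add: at_within_Icc_at)

lemma continuous_on_Ifun: "continuous_on {0..lam} (Ifun \<beta> h)"
proof -
  have "continuous_on {0..lam} F"
    by (intro indefinite_integral_continuous_1 integrable_continuous_interval continuous_on_drift)
  then show ?thesis
    unfolding Ifun_def by (intro continuous_intros continuous_Psi ballI Psi_nonzero)
qed

lemma Ifun_pos: "x \<in> {0..lam} \<Longrightarrow> Ifun \<beta> h x > 0"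
  using Psi_pos by (simp add: Ifun_def)

lemma Ifun_0: "Ifun \<beta> h 0 = 1 / Psi \<beta> h 0"
  by (simp add: Ifun_def)

lemma J_has_derivative:
  "x \<in> {0..lam} \<Longrightarrow> (J has_real_derivative Ifun \<beta> h x) (at x within {0..lam})"
  using integral_has_vector_derivative[OF continuous_on_Ifun]
  by (simp add: has_real_derivative_iff_has_vector_derivative)

lemma J_has_derivative_at:
  "x \<in> {0<..<lam} \<Longrightarrow> (J has_real_derivative Ifun \<beta> h x) (at x)"
  using J_has_derivative[of x] by (simp add: at_within_Icc_at)

lemma integrable_Ifun: "0 \<le> s \<Longrightarrow> t \<le> lam \<Longrightarrow> Ifun \<beta> h integrable_on {s..t}"
  by (rule integrable_continuous_interval, rule continuous_on_subset[OF continuous_on_Ifun]) auto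

lemma continuous_on_J: "continuous_on {0..lam} J"
  by (rule indefinite_integral_continuous_1, rule integrable_Ifun) auto

lemma integral_Ifun_nonneg: "0 \<le> s \<Longrightarrow> t \<le> lam \<Longrightarrow> 0 \<le> integral {s..t} (Ifun \<beta> h)"
  by (rule integral_nonneg[OF integrable_Ifun]) (auto intro!: less_imp_le[OF Ifun_pos])

lemma J_bounds:
  assumes "x \<in> {0..lam}"
  shows "0 \<le> J x" "J x \<le> J lam"
proof -
  show "0 \<le> J x" using assms integral_Ifun_nonneg by simp
  have "J x + integral {x..lam} (Ifun \<beta> h) = J lam"
    by (rule Henstock_Kurzweil_Integration.integral_combine) (use assms integrable_Ifun in auto)
  then show "J x \<le> J lam" using assms integral_Ifun_nonneg[of x lam] by simp
qed

lemma Dconst_eq: "Dconst lam \<beta> \<gamma> h = \<gamma> / (1 + \<gamma> * J lam)"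
  by (simp add: Dconst_def divide_inverse)

lemma Dconst_pos: "Dconst lam \<beta> \<gamma> h > 0"
  using J_bounds(1)[of lam] lam_pos gamma_pos by (simp add: Dconst_eq add_pos_nonneg)

lemma yformula_at_end: "Dconst lam \<beta> \<gamma> h * (1 / \<gamma> + J lam) = 1"
proof -
  have "1 + \<gamma> * J lam > 0"
    using J_bounds(1)[of lam] lam_pos gamma_pos by (simp add: add_pos_nonneg)
  moreover have "1 / \<gamma> + J lam = (1 + \<gamma> * J lam) / \<gamma>"
    using gamma_pos by (simp add: field_simps)
  ultimately show ?thesis
    using gamma_pos by (simp add: Dconst_eq)
qed

lemma yformula_bounds:
  assumes "\<eta> \<in> {0..lam}"
  shows "0 \<le> yformula lam \<beta> \<gamma> h \<eta>" "yformula lam \<beta> \<gamma> h \<eta> \<le> 1"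
  using J_bounds[OF assms] gamma_pos Dconst_pos yformula_at_end
    mult_left_mono[of "1 / \<gamma> + J \<eta>" "1 / \<gamma> + J lam" "Dconst lam \<beta> \<gamma> h"]
  by (simp_all add: yformula_def)

lemma Psi_Ifun_has_derivative:
  assumes x: "x \<in> {0<..<lam}"
  shows "((\<lambda>t. Psi \<beta> h t * Ifun \<beta> h t) has_real_derivative - 2 * x * Ifun \<beta> h x) (at x)"
proof -
  have "((\<lambda>t. exp (- 2 * F t)) has_real_derivative exp (- 2 * F x) * (- 2 * (x / Psi \<beta> h x))) (at x)"
    by (intro DERIV_chain2[OF DERIV_exp] DERIV_cmult F_has_derivative_at[OF x])
  then have "((\<lambda>t. exp (- 2 * F t)) has_real_derivative - 2 * x * Ifun \<beta> h x) (at x)"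
    by (simp add: Ifun_def mult_ac)
  then show ?thesis
  proof (rule has_field_derivative_transform_within_open[OF _ open_greaterThanLessThan x])
    fix t assume "t \<in> {0<..<lam}"
    then show "exp (- 2 * F t) = Psi \<beta> h t * Ifun \<beta> h t"
      using Psi_nonzero[of t] by (simp add: Ifun_def)
  qed
qed

lemma yformula_solves_bvp: "solves_bvp lam \<beta> \<gamma> h (yformula lam \<beta> \<gamma> h)"
proof -
  define D where "D = Dconst lam \<beta> \<gamma> h"
  have y: "yformula lam \<beta> \<gamma> h = (\<lambda>\<eta>. D * (1 / \<gamma> + J \<eta>))"
    by (simp add: fun_eq_iff yformula_def D_def)
  show ?thesis
  proof (rule solves_bvpI[where y' = "\<lambda>x. D * Ifun \<beta> h x" and w = "\<lambda>x. D * (- 2 * x * Ifun \<beta> h x)"])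
    show "continuous_on {0..lam} (yformula lam \<beta> \<gamma> h)"
      unfolding y by (intro continuous_intros continuous_on_J)
    show "(yformula lam \<beta> \<gamma> h has_real_derivative D * Ifun \<beta> h x) (at x within {0..lam})"
      if "x \<in> {0..<lam}" for x
      unfolding y using that by (auto intro!: derivative_eq_intros J_has_derivative)
    show "((\<lambda>t. Psi \<beta> h t * (D * Ifun \<beta> h t)) has_real_derivative D * (- 2 * x * Ifun \<beta> h x)) (at x)"
      if "x \<in> {0<..<lam}" for x
      using DERIV_cmult[OF Psi_Ifun_has_derivative[OF that], of D] by (simp add: mult.left_commute)
    show "D * (- 2 * x * Ifun \<beta> h x) + 2 * x * (D * Ifun \<beta> h x) = 0" for x
      by simp
    show "Psi \<beta> h 0 * (D * Ifun \<beta> h 0) - \<gamma> * yformula lam \<beta> \<gamma> h 0 = 0"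
      using Psi_nonzero[of 0] lam_pos gamma_pos by (simp add: y Ifun_0)
    show "yformula lam \<beta> \<gamma> h lam = 1"
      using yformula_at_end by (simp add: y D_def)
  qed
qed

lemma flux_integrating_factor:
  assumes flux: "\<And>x. x \<in> {0<..<lam} \<Longrightarrow> ((\<lambda>t. Psi \<beta> h t * y' t) has_real_derivative w x) (at x)"
    and ode: "\<And>x. x \<in> {0<..<lam} \<Longrightarrow> w x + 2 * x * y' x = 0"
  obtains C where "\<And>t. t \<in> {0<..<lam} \<Longrightarrow> y' t = C * Ifun \<beta> h t"
proof -
  define v where "v t = Psi \<beta> h t * y' t * exp (2 * F t)" for t
  have "(v has_real_derivative 0) (at x within {0<..<lam})" if x: "x \<in> {0<..<lam}" for x
  proof -
    have "(v has_real_derivative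
        w x * exp (2 * F x) + exp (2 * F x) * (2 * (x / Psi \<beta> h x)) * (Psi \<beta> h x * y' x)) (at x)"
      unfolding v_def
      by (intro DERIV_mult flux[OF x] DERIV_chain2[OF DERIV_exp] DERIV_cmult F_has_derivative_at[OF x])
    moreover have "w x * exp (2 * F x) + exp (2 * F x) * (2 * (x / Psi \<beta> h x)) * (Psi \<beta> h x * y' x)
        = exp (2 * F x) * (w x + 2 * x * y' x)"
      using Psi_nonzero[of x] x by (simp add: field_simps)
    ultimately show ?thesis
      using ode[OF x] by (simp add: has_field_derivative_at_within)
  qed
  then obtain C where C: "\<And>t. t \<in> {0<..<lam} \<Longrightarrow> v t = C"
    using has_field_derivative_zero_constant[OF convex_real_interval(8)] by blast
  have "y' t = C * Ifun \<beta> h t" if t: "t \<in> {0<..<lam}" for t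
  proof -
    have "C * exp (- 2 * F t) = Psi \<beta> h t * y' t * (exp (2 * F t) * exp (- 2 * F t))"
      using C[OF t] by (simp add: v_def)
    also have "\<dots> = Psi \<beta> h t * y' t"
      by (simp flip: exp_add)
    finally show ?thesis
      using Psi_nonzero[of t] t by (simp add: Ifun_def field_simps)
  qed
  then show ?thesis by (rule that)
qed

lemma solves_bvp_affine_in_J:
  assumes "solves_bvp lam \<beta> \<gamma> h y"
  obtains C where "\<And>\<eta>. \<eta> \<in> {0..lam} \<Longrightarrow> y \<eta> = C * (1 / \<gamma> + J \<eta>)"
proof -
  obtain y' w where y_cont: "continuous_on {0..lam} y"
    and y': "\<And>x. x \<in> {0..<lam} \<Longrightarrow> (y has_real_derivative y' x) (at x within {0..lam})"
    and flux: "\<And>x. x \<in> {0<..<lam} \<Longrightarrow> ((\<lambda>t. Psi \<beta> h t * y' t) has_real_derivative w x) (at x)"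
    and ode: "\<And>x. x \<in> {0<..<lam} \<Longrightarrow> w x + 2 * x * y' x = 0"
    and robin: "Psi \<beta> h 0 * y' 0 - \<gamma> * y 0 = 0"
    using assms by (rule solves_bvpE) (rule that)
  obtain C where y'_eq: "\<And>t. t \<in> {0<..<lam} \<Longrightarrow> y' t = C * Ifun \<beta> h t"
    using flux_integrating_factor[OF flux ode] by blast
  have y_eq: "y t = y 0 + C * J t" if t: "t \<in> {0..lam}" for t
  proof (cases "t = 0")
    case False
    define z where "z = (\<lambda>s. y s - C * J s)"
    have "z t = z 0"
    proof (rule DERIV_isconst_end[of 0 t z])
      show "0 < t" using False t by simp
      show "continuous_on {0..t} z"
        unfolding z_def using t
        by (intro continuous_intros continuous_on_subset[OF y_cont] continuous_on_subset[OF continuous_on_J]) auto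
      show "(z has_real_derivative 0) (at x)" if "0 < x" "x < t" for x
      proof -
        have x: "x \<in> {0<..<lam}" using that t by auto
        then have "(y has_real_derivative y' x) (at x)"
          using y'[of x] by (simp add: at_within_Icc_at)
        from DERIV_diff[OF this DERIV_cmult[OF J_has_derivative_at[OF x], of C]] show ?thesis
          using y'_eq[OF x] by (simp add: z_def)
      qed
    qed
    then show ?thesis by (simp add: z_def)
  qed simp
  \<comment> \<open>y' is only an existential witness; its value at 0, which enters the Robin condition,
    is forced by uniqueness of the one-sided derivative.\<close>
  have "(y has_real_derivative C * Ifun \<beta> h 0) (at 0 within {0..lam})"
  proof (rule has_field_derivative_transform_within[OF _ zero_less_one])
    show "((\<lambda>t. y 0 + C * J t) has_real_derivative C * Ifun \<beta> h 0) (at 0 within {0..lam})"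
      using lam_pos by (auto intro!: derivative_eq_intros J_has_derivative)
    show "0 \<in> {0..lam}" using lam_pos by simp
    show "y 0 + C * J t = y t" if "t \<in> {0..lam}" for t
      by (rule y_eq[OF that, symmetric])
  qed
  then have "y' 0 = C * Ifun \<beta> h 0"
    using y'[of 0] lam_pos
    by (intro has_field_derivative_unique[of y _ 0 "{0..lam}"]) (auto simp: at_within_Icc_at_right)
  then have "y 0 = C / \<gamma>"
    using robin Psi_nonzero[of 0] lam_pos gamma_pos by (simp add: Ifun_0 field_simps)
  then show ?thesis
    using y_eq that[of C] by (simp add: algebra_simps)
qed

lemma solves_bvp_imp_yformula:
  assumes "solves_bvp lam \<beta> \<gamma> h y" "\<eta> \<in> {0..lam}"
  shows "y \<eta> = yformula lam \<beta> \<gamma> h \<eta>"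
proof -
  obtain C where C: "\<And>\<eta>. \<eta> \<in> {0..lam} \<Longrightarrow> y \<eta> = C * (1 / \<gamma> + J \<eta>)"
    using solves_bvp_affine_in_J[OF assms(1)] by blast
  have "C * (1 / \<gamma> + J lam) = Dconst lam \<beta> \<gamma> h * (1 / \<gamma> + J lam)"
    using C[of lam] assms(1) lam_pos yformula_at_end by (auto elim: solves_bvpE)
  moreover have "1 / \<gamma> + J lam > 0"
    using J_bounds(1)[of lam] lam_pos gamma_pos by (simp add: add_pos_nonneg)
  ultimately have "C = Dconst lam \<beta> \<gamma> h"
    by simp
  then show ?thesis
    using C[OF assms(2)] by (simp add: yformula_def)
qed

lemma solves_bvp_iff_yformula:
  "solves_bvp lam \<beta> \<gamma> h y \<longleftrightarrow> (\<forall>\<eta>\<in>{0..lam}. y \<eta> = yformula lam \<beta> \<gamma> h \<eta>)"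
  using solves_bvp_imp_yformula solves_bvp_cong[OF yformula_solves_bvp lam_pos] by metis

lemma holomorphic_extension_at_yformula:
  assumes h: "real_analytic_on h {0..lam}" and x: "x \<in> {0..lam}"
  shows "holomorphic_extension_at {0..lam} (yformula lam \<beta> \<gamma> h) x"
proof -
  have "holomorphic_extension_at {0..lam} h x"
    using real_analytic_on_imp_holomorphic_extension_at[OF h lam_pos x] .
  then have Psi: "holomorphic_extension_at {0..lam} (Psi \<beta> h) x"
    unfolding Psi_def by (intro holomorphic_extension_at_add holomorphic_extension_at_mult holomorphic_extension_at_const)
  then have "holomorphic_extension_at {0..lam} (\<lambda>\<xi>. \<xi> * inverse (Psi \<beta> h \<xi>)) x"
    by (intro holomorphic_extension_at_mult holomorphic_extension_at_ident holomorphic_extension_at_inverse x Psi_nonzero)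
  then have "holomorphic_extension_at {0..lam} (\<lambda>\<xi>. \<xi> / Psi \<beta> h \<xi>) x"
    by (rule holomorphic_extension_at_cong) (simp add: divide_inverse)
  then have "holomorphic_extension_at {0..lam} F x"
    by (rule holomorphic_extension_at_integral[OF continuous_on_drift _ x])
  then have "holomorphic_extension_at {0..lam} (\<lambda>t. exp (- 2 * F t) * inverse (Psi \<beta> h t)) x"
    by (intro holomorphic_extension_at_mult holomorphic_extension_at_exp holomorphic_extension_at_const
        holomorphic_extension_at_inverse Psi x Psi_nonzero)
  then have "holomorphic_extension_at {0..lam} (Ifun \<beta> h) x"
    by (rule holomorphic_extension_at_cong) (simp add: Ifun_def divide_inverse)
  then have "holomorphic_extension_at {0..lam} J x"
    by (rule holomorphic_extension_at_integral[OF continuous_on_Ifun _ x])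
  then show ?thesis
    unfolding yformula_def
    by (intro holomorphic_extension_at_mult holomorphic_extension_at_add holomorphic_extension_at_const)
qed

lemma yformula_in_Kset:
  assumes "real_analytic_on h {0..lam}"
  shows "yformula lam \<beta> \<gamma> h \<in> Kset lam"
proof -
  have "real_analytic_on (yformula lam \<beta> \<gamma> h) {0..lam}"
    by (intro holomorphic_extension_imp_real_analytic_on holomorphic_extension_at_yformula assms)
  moreover have "bounded (yformula lam \<beta> \<gamma> h ` {0..lam})"
    using yformula_bounds by (intro boundedI[of _ 1]) force
  moreover have "supnorm lam (yformula lam \<beta> \<gamma> h) \<le> 1"
    using yformula_bounds lam_pos by (intro supnorm_le) auto
  ultimately show ?thesis
    using yformula_bounds(1) by (simp add: Kset_def Xspace_def)
qed

end

lemma Kset_imp_linear_bvp: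
  assumes "lam > 0" "\<gamma> > 0" "\<beta> \<ge> 0" "h \<in> Kset lam"
  shows "linear_bvp lam \<beta> \<gamma> h"
proof
  have h: "real_analytic_on h {0..lam}" "\<And>x. x \<in> {0..lam} \<Longrightarrow> h x \<ge> 0"
    using assms(4) by (auto simp: Kset_def Xspace_def)
  show "continuous_on {0..lam} (Psi \<beta> h)"
    unfolding Psi_def using real_analytic_on_imp_continuous_on[OF h(1) assms(1)]
    by (intro continuous_intros)
  show "Psi \<beta> h x > 0" if "x \<in> {0..lam}" for x
    using h(2)[OF that] assms(3) by (simp add: Psi_def add_pos_nonneg)
qed (use assms in auto)

theorem lemma3p1:
  fixes lam \<beta> \<gamma> :: real and h :: "real \<Rightarrow> real"
  assumes "lam > 0" and "\<gamma> > 0" and "\<beta> \<ge> 0"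
    and "h \<in> Kset lam"
  shows "(\<forall>y. solves_bvp lam \<beta> \<gamma> h y \<longleftrightarrow> (\<forall>\<eta>\<in>{0..lam}. y \<eta> = yformula lam \<beta> \<gamma> h \<eta>))
         \<and> yformula lam \<beta> \<gamma> h \<in> Kset lam"
proof -
  interpret linear_bvp lam \<beta> \<gamma> h
    using Kset_imp_linear_bvp[OF assms] .
  have "real_analytic_on h {0..lam}"
    using assms(4) by (simp add: Kset_def Xspace_def)
  then show ?thesis
    using solves_bvp_iff_yformula yformula_in_Kset by blast
qed

end
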